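(* Suppose Assumptions 1–4 hold and $p$ is convex. Let $\mathbf{x}$ be a Cournot candidate and $\mathbf{x}^S$ a social optimum. (a) If $p(X)=p(X^S)$, then $\gamma(\mathbf{x})=1$. (b) If $p(X)\neq p(X^S)$, let $c=|p'(X)|$, $d=\left|\dfrac{p(X^S)-p(X)}{X^S-X}\right|$ and $\overline c=c/d$. Then $\overline c\ge1$ and $$1>\gamma(\mathbf{x})\ge f(\overline c):=\frac{\phi^2+2}{\phi^2+2\phi+\overline c},\qquad \phi=\max\left\{\frac{2-\overline c+\sqrt{\overline c^{\,2}-4\overline c+12}}{2},\,1\right\}.$$
   Context: Cournot model: $N$ suppliers, inverse demand $p:[0,\infty)\to[0,\infty)$, supplier $n$ has cost $C_n:[0,\infty)\to[0,\infty)$ and chooses $x_n\ge0$; $X=\sum_n x_n$, $X^S=\sum_n x_n^S$. $\partial_\pm$ denote right/left derivatives; $C_n'(0)$ is the right derivative at $0$. Assumption 1: each $C_n$ is convex, continuous, nondecreasing on $[0,\infty)$, continuously differentiable on $(0,\infty)$, with $C_n(0)=0$. Assumption 2: $p$ is continuous, nonnegative, nonincreasing, $p(0)>0$; its right derivative at $0$ exists and at every $q>0$ its left and right derivatives exist. Assumption 3: there exists $R>0$ such that $p(R)\le\min_n C_n'(0)$. Assumption 4: $p(0)>\min_n C_n'(0)$. Social welfare of $\mathbf{x}\ge0$: $W(\mathbf{x})=\int_0^X p(q)\,dq-\sum_{n=1}^N C_n(x_n)$; a social optimum $\mathbf{x}^S$ maximizes $W$. Efficiency: $\gamma(\mathbf{x})=W(\mathbf{x})/W(\mathbf{x}^S)$.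 A nonnegative vector $\mathbf{x}$ is a Cournot candidate if for every $n$: $C_n'(x_n)\le p(X)+x_n\,\partial_-p(X)$ whenever $x_n>0$, and $C_n'(x_n)\ge p(X)+x_n\,\partial_+p(X)$. (For convex $p$, $p$ is differentiable at $X$ for any Cournot candidate with $X>0$.) *)

theory Defs
  imports "HOL-Analysis.Analysis"
begin

text \<open>Suppliers are indexed by n < N; a production profile is a function
  x :: nat => real, of which only the components n < N matter.\<close>

definition total :: "nat \<Rightarrow> (nat \<Rightarrow> real) \<Rightarrow> real" where
  "total N x = (\<Sum>n<N. x n)"

definition nonneg_profile :: "nat \<Rightarrow> (nat \<Rightarrow> real) \<Rightarrow> bool" where
  "nonneg_profile N x \<longleftrightarrow> (\<forall>n<N. 0 \<le> x n)"

definition welfare :: "nat \<Rightarrow> (real \<Rightarrow> real) \<Rightarrow> (nat \<Rightarrow> real \<Rightarrow> real) \<Rightarrow> (nat \<Rightarrow> real) \<Rightarrow> real" where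
  "welfare N p C x = integral {0..total N x} p - (\<Sum>n<N. C n (x n))"

definition social_optimum :: "nat \<Rightarrow> (real \<Rightarrow> real) \<Rightarrow> (nat \<Rightarrow> real \<Rightarrow> real) \<Rightarrow> (nat \<Rightarrow> real) \<Rightarrow> bool" where
  "social_optimum N p C xS \<longleftrightarrow> nonneg_profile N xS \<and>
     (\<forall>y. nonneg_profile N y \<longrightarrow> welfare N p C y \<le> welfare N p C xS)"

definition efficiency :: "nat \<Rightarrow> (real \<Rightarrow> real) \<Rightarrow> (nat \<Rightarrow> real \<Rightarrow> real) \<Rightarrow> (nat \<Rightarrow> real) \<Rightarrow> (nat \<Rightarrow> real) \<Rightarrow> real" where
  "efficiency N p C xS x = welfare N p C x / welfare N p C xS"

text \<open>Cournot candidate. dC n is the derivative of C n (right derivative at 0),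
  pL / pR are the left / right derivatives of p.\<close>
definition cournot_candidate ::
  "nat \<Rightarrow> (nat \<Rightarrow> real \<Rightarrow> real) \<Rightarrow> (real \<Rightarrow> real) \<Rightarrow> (real \<Rightarrow> real) \<Rightarrow> (real \<Rightarrow> real) \<Rightarrow> (nat \<Rightarrow> real) \<Rightarrow> bool" where
  "cournot_candidate N dC p pL pR x \<longleftrightarrow> nonneg_profile N x \<and>
     (\<forall>n<N. (0 < x n \<longrightarrow> dC n (x n) \<le> p (total N x) + x n * pL (total N x)) \<and>
            dC n (x n) \<ge> p (total N x) + x n * pR (total N x))"

definition phi_bound :: "real \<Rightarrow> real" where
  "phi_bound cb = max ((2 - cb + sqrt (cb\<^sup>2 - 4 * cb + 12)) / 2) 1"

definition f_bound :: "real \<Rightarrow> real" where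
  "f_bound cb = ((phi_bound cb)\<^sup>2 + 2) / ((phi_bound cb)\<^sup>2 + 2 * phi_bound cb + cb)"

end

theory Submission
  imports Defs
begin

text \<open>
  Let \<open>x\<close> be a Cournot candidate with total \<open>X\<close> and price \<open>P = p X\<close>, and \<open>xS\<close> a social
  optimum with total \<open>XS\<close> and price \<open>PS\<close>. By Assumption 4 some supplier is active; its two
  Cournot inequalities together with convexity force \<open>p\<close> to be differentiable at \<open>X\<close>, with
  derivative \<open>D \<le> 0\<close>, and \<open>C\<^sub>n'(x\<^sub>n) = P + D x\<^sub>n\<close> for active suppliers. Supporting lines of
  the convex costs and of \<open>p\<close> then give \<open>W \<ge> |D| (X\<^sup>2/2 + \<Sum>x\<^sub>n\<^sup>2)\<close> and a bound for the loss
  \<open>WS - W\<close> by the extra consumer value beyond \<open>X\<close>.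
  (a) If \<open>P = PS\<close>, the first-order conditions at the optimum force \<open>D = 0\<close> and \<open>p\<close> is
  constant between \<open>X\<close> and \<open>XS\<close>, so there is no loss.
  (b) If \<open>P \<noteq> PS\<close>, then \<open>X < XS\<close>; the trapezoid bound along the chord of slope \<open>-d\<close> and
  maximisation over \<open>XS - X\<close> bound the loss by \<open>c = |D|\<close>, \<open>d\<close> and the largest output, and the
  resulting ratio, a function of \<open>\<phi> = X / max x\<^sub>n \<ge> 1\<close>, is minimised at \<open>phi_bound (c / d)\<close>.
\<close>

text \<open>The difference quotient of \<open>f\<close> based at \<open>c\<close>;
  its monotonicity in the second point (the three chord lemma) yields every tangent-line
  property needed below.\<close>
definition diff_quot :: "(real \<Rightarrow> real) \<Rightarrow> real \<Rightarrow> real \<Rightarrow> real" where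
  "diff_quot f c y = (f y - f c) / (y - c)"

lemma diff_quot_sym: "diff_quot f c y = (f c - f y) / (c - y)"
  unfolding diff_quot_def by (metis minus_diff_eq minus_divide_divide)

lemma convex_diff_quot_mono:
  fixes f :: "real \<Rightarrow> real"
  assumes f: "convex_on I f" and I: "c \<in> I" "y \<in> I" "z \<in> I"
    and ne: "y \<noteq> c" "z \<noteq> c" and yz: "y \<le> z"
  shows "diff_quot f c y \<le> diff_quot f c z"
proof -
  consider "y = z" | "y < z" "z < c" | "y < c" "c < z" | "c < y" "y < z"
    using ne yz by linarith
  then show ?thesis
  proof cases
    case 2
    then show ?thesis
      using convex_on_slope_le(2)[OF f I(2) I(1) 2] by (simp add: diff_quot_def)
  next
    case 3
    then show ?thesis
      using convex_on_slope_le[OF f I(2) I(3) 3] diff_quot_sym[of f c z]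
      unfolding diff_quot_def by linarith
  next
    case 4
    then show ?thesis
      using convex_on_slope_le(1)[OF f I(1) I(3) 4] by (simp add: diff_quot_sym)
  qed simp
qed

lemma right_derivative_diff_quot:
  assumes "(f has_real_derivative D) (at c within {c..})"
  shows "(diff_quot f c \<longlongrightarrow> D) (at_right c)"
  using assms unfolding has_field_derivative_iff diff_quot_def
  by (rule tendsto_mono[rotated]) (intro at_le, auto)

lemma left_derivative_diff_quot:
  assumes "(f has_real_derivative D) (at c within {..c})"
  shows "(diff_quot f c \<longlongrightarrow> D) (at_left c)"
  using assms unfolding has_field_derivative_iff diff_quot_def
  by (rule tendsto_mono[rotated]) (intro at_le, auto)

lemma convex_right_derivative_tangent:
  fixes f :: "real \<Rightarrow> real"
  assumes f: "convex_on {a..} f" and c: "a \<le> c" and u: "a \<le> u"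
    and D: "(f has_real_derivative D) (at c within {c..})"
  shows "D * (u - c) \<le> f u - f c"
proof -
  have lim: "(diff_quot f c \<longlongrightarrow> D) (at_right c)"
    using D by (rule right_derivative_diff_quot)
  have mono: "diff_quot f c y \<le> diff_quot f c z" if "a \<le> y" "y \<le> z" "y \<noteq> c" "z \<noteq> c" for y z
    using convex_diff_quot_mono[OF f] that c by auto
  consider "c < u" | "u < c" | "u = c" by linarith
  then show ?thesis
  proof cases
    case 1
    have "\<forall>\<^sub>F y in at_right c. diff_quot f c y \<le> diff_quot f c u"
      using eventually_at_right_real[OF 1] by eventually_elim (use mono c in auto)
    then have "D \<le> diff_quot f c u"
      using lim by (intro tendsto_upperbound) auto
    with 1 show ?thesis by (simp add: diff_quot_def pos_le_divide_eq)
  next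
    case 2
    have "\<forall>\<^sub>F y in at_right c. diff_quot f c u \<le> diff_quot f c y"
      using eventually_at_right_less[of c] by eventually_elim (use mono u 2 in auto)
    then have "diff_quot f c u \<le> D"
      using lim by (intro tendsto_lowerbound) auto
    with 2 show ?thesis by (simp add: diff_quot_def neg_divide_le_eq)
  qed simp
qed

lemma convex_left_le_right_derivative:
  fixes f :: "real \<Rightarrow> real"
  assumes f: "convex_on {a..} f" and c: "a < c"
    and L: "(f has_real_derivative L) (at c within {..c})"
    and R: "(f has_real_derivative R) (at c within {c..})"
  shows "L \<le> R"
proof -
  have below: "L \<le> diff_quot f c z" if z: "c < z" for z
  proof -
    have "\<forall>\<^sub>F y in at_left c. diff_quot f c y \<le> diff_quot f c z"
      using eventually_at_left_real[OF c]
      by eventually_elim (use convex_diff_quot_mono[OF f] z in auto)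
    then show ?thesis
      using left_derivative_diff_quot[OF L] by (intro tendsto_upperbound) auto
  qed
  have "\<forall>\<^sub>F z in at_right c. L \<le> diff_quot f c z"
    using eventually_at_right_less[of c] by eventually_elim (rule below)
  then show ?thesis
    using right_derivative_diff_quot[OF R] by (intro tendsto_lowerbound) auto
qed

text \<open>Hence if the reverse inequality holds as well, the function is differentiable.
  This is how the Cournot conditions force \<open>p\<close> to be differentiable at \<open>X\<close>.\<close>
lemma convex_two_sided_derivative:
  fixes f :: "real \<Rightarrow> real"
  assumes f: "convex_on {a..} f" and c: "a < c"
    and L: "(f has_real_derivative L) (at c within {..c})"
    and R: "(f has_real_derivative R) (at c within {c..})"
    and RL: "R \<le> L"
  shows "(f has_real_derivative R) (at c)"
proof -
  have "L = R" using convex_left_le_right_derivative[OF f c L R] RL by simp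
  then have "((\<lambda>y. (f y - f c) / (y - c)) \<longlongrightarrow> R) (at c within {..c} \<union> {c..})"
    using L R unfolding has_field_derivative_iff Lim_within_Un by simp
  moreover have "{..c} \<union> {c..} = (UNIV :: real set)" by auto
  ultimately show ?thesis unfolding has_field_derivative_iff by simp
qed

lemma marginal_gain:
  fixes p g :: "real \<Rightarrow> real"
  assumes p: "continuous_on {0..} p" and T: "0 \<le> T"
    and g: "(g has_real_derivative m) (at y within {y..})" and m: "m < p T"
  shows "\<exists>t>0. integral {0..T} p - g y < integral {0..T + t} p - g (y + t)"
proof -
  define h where "h t = integral {0..T + t} p - g (y + t)" for t
  have "((\<lambda>s. integral {0..s} p) has_real_derivative p T) (at T within {0..T + 1})"
    using T by (intro integral_has_real_derivative continuous_on_subset[OF p]) auto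
  then have "((\<lambda>s. integral {0..s} p) has_real_derivative p T) (at T within (\<lambda>t. T + t) ` {0..1})"
    by (rule DERIV_subset) (use T in auto)
  then have I: "((\<lambda>s. integral {0..s} p) has_real_derivative p T)
      (at ((\<lambda>t. T + t) 0) within (\<lambda>t. T + t) ` {0..1})"
    by simp
  have "(g has_real_derivative m) (at y within (\<lambda>t. y + t) ` {0..1})"
    using g by (rule DERIV_subset) auto
  then have G: "(g has_real_derivative m) (at ((\<lambda>t. y + t) 0) within (\<lambda>t. y + t) ` {0..1})"
    by simp
  have shift: "((\<lambda>t. z + t) has_real_derivative 1) (at 0 within {0..1})" for z :: real
    by (auto intro!: derivative_eq_intros)
  have "(h has_real_derivative p T - m) (at 0 within {0..1})"
    unfolding h_def using DERIV_diff[OF DERIV_image_chain[OF I shift] DERIV_image_chain[OF G shift]]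
    by (simp add: o_def)
  with m obtain d where d: "d > 0" "\<And>s. 0 < s \<Longrightarrow> s \<le> 1 \<Longrightarrow> s < d \<Longrightarrow> h 0 < h s"
    using has_real_derivative_pos_inc_right[of h "p T - m" 0 "{0..1}"] by auto
  have "h 0 < h (min (d / 2) 1)" using d by (intro d(2)) auto
  then show ?thesis using d(1) unfolding h_def by (intro exI[of _ "min (d / 2) 1"]) auto
qed

lemma sum_fun_upd:
  fixes g :: "nat \<Rightarrow> real \<Rightarrow> real"
  assumes "n < N"
  shows "(\<Sum>k<N. g k ((x(n := v)) k)) = (\<Sum>k<N. g k (x k)) - g n (x n) + g n v"
proof -
  have fin: "finite {..<N}" "n \<in> {..<N}" using assms by auto
  have "(\<Sum>k\<in>{..<N} - {n}. g k ((x(n := v)) k)) = (\<Sum>k\<in>{..<N} - {n}. g k (x k))"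
    by (rule sum.cong) auto
  then show ?thesis
    using sum.remove[OF fin, of "\<lambda>k. g k ((x(n := v)) k)"] sum.remove[OF fin, of "\<lambda>k. g k (x k)"]
    by simp
qed

lemma welfare_raise_one:
  assumes "n < N"
  shows "welfare N p C (x(n := x n + t)) = welfare N p C x
    + ((integral {0..total N x + t} p - C n (x n + t)) - (integral {0..total N x} p - C n (x n)))"
proof -
  have "total N (x(n := x n + t)) = total N x + t"
    unfolding total_def using sum_fun_upd[OF assms, of "\<lambda>k u. u" x "x n + t"] by simp
  then show ?thesis
    unfolding welfare_def using sum_fun_upd[OF assms, of C x "x n + t"] by simp
qed

lemma integral_affine:
  fixes a b u w :: real
  assumes "a \<le> b"
  shows "integral {a..b} (\<lambda>q. u + w * q) = u * (b - a) + w * (b\<^sup>2 - a\<^sup>2) / 2"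
proof -
  have "((\<lambda>q. u + w * q) has_integral (u * b + w * b\<^sup>2 / 2) - (u * a + w * a\<^sup>2 / 2)) {a..b}"
    using assms
    by (intro fundamental_theorem_of_calculus)
      (auto intro!: derivative_eq_intros simp: has_real_derivative_iff_has_vector_derivative[symmetric])
  then have "integral {a..b} (\<lambda>q. u + w * q) = (u * b + w * b\<^sup>2 / 2) - (u * a + w * a\<^sup>2 / 2)"
    by (rule integral_unique)
  then show ?thesis by (simp add: field_simps)
qed

lemma integral_ge_affine:
  fixes f :: "real \<Rightarrow> real"
  assumes "a \<le> b" and "f integrable_on {a..b}" and "\<And>q. q \<in> {a..b} \<Longrightarrow> u + w * q \<le> f q"
  shows "u * (b - a) + w * (b\<^sup>2 - a\<^sup>2) / 2 \<le> integral {a..b} f"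
proof -
  have "integral {a..b} (\<lambda>q. u + w * q) \<le> integral {a..b} f"
    by (rule integral_le[OF integrable_continuous_interval assms(2)])
      (auto intro!: continuous_intros assms(3))
  then show ?thesis using integral_affine[OF assms(1)] by simp
qed

lemma convex_integral_le_trapezoid:
  fixes f :: "real \<Rightarrow> real"
  assumes f: "convex_on {a..b} f" and cont: "continuous_on {a..b} f" and ab: "a < b"
  shows "integral {a..b} f \<le> (b - a) * (f a + f b) / 2"
proof -
  define s where "s = (f b - f a) / (b - a)"
  have "integral {a..b} f \<le> integral {a..b} (\<lambda>q. (f a - s * a) + s * q)"
  proof (rule integral_le)
    show "f q \<le> (f a - s * a) + s * q" if "q \<in> {a..b}" for q
    proof -
      have "f q \<le> s * (q - a) + f a" using convex_onD_Icc'[OF f that] by (simp add: s_def)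
      then show ?thesis by (simp add: algebra_simps)
    qed
  qed (use cont in \<open>auto intro!: integrable_continuous_interval continuous_intros\<close>)
  also have "\<dots> = (f a - s * a) * (b - a) + s * (b\<^sup>2 - a\<^sup>2) / 2"
    using ab by (intro integral_affine) simp
  also have "\<dots> = (b - a) * (f a + s * (b - a) / 2)"
    by (simp add: power2_eq_square field_simps)
  also have "s * (b - a) = f b - f a"
    using ab by (simp add: s_def)
  also have "(b - a) * (f a + (f b - f a) / 2) = (b - a) * (f a + f b) / 2"
    by (simp add: field_simps)
  finally show ?thesis .
qed

text \<open>For \<open>cb \<ge> 1\<close>, \<open>phi_bound cb\<close> minimises
  \<open>\<phi> \<mapsto> (\<phi>\<^sup>2 + 2) / (\<phi>\<^sup>2 + 2\<phi> + cb)\<close> over \<open>\<phi> \<ge> 1\<close>: it is the larger root of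
  \<open>\<phi>\<^sup>2 + (cb - 2) \<phi> - 2\<close>, or \<open>1\<close> if that root is smaller than \<open>1\<close>.\<close>
lemma f_bound_minimal:
  fixes cb ph :: real
  assumes cb: "1 \<le> cb" and ph: "1 \<le> ph"
  shows "f_bound cb \<le> (ph\<^sup>2 + 2) / (ph\<^sup>2 + 2 * ph + cb)"
proof -
  define s where "s = sqrt (cb\<^sup>2 - 4 * cb + 12)"
  define r where "r = (2 - cb + s) / 2"
  have "cb\<^sup>2 - 4 * cb + 12 = (cb - 2)\<^sup>2 + 8"
    by (simp add: power2_eq_square algebra_simps)
  then have "0 \<le> cb\<^sup>2 - 4 * cb + 12"
    by (metis add_nonneg_nonneg zero_le_numeral zero_le_power2)
  then have s2: "s\<^sup>2 = cb\<^sup>2 - 4 * cb + 12" and s0: "0 \<le> s"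
    unfolding s_def by simp_all
  have phi: "phi_bound cb = max r 1"
    unfolding phi_bound_def r_def s_def ..
  have cross: "((phi_bound cb)\<^sup>2 + 2) * (ph\<^sup>2 + 2 * ph + cb)
      \<le> (ph\<^sup>2 + 2) * ((phi_bound cb)\<^sup>2 + 2 * phi_bound cb + cb)"
  proof (cases "1 \<le> r")
    case True
    have sr: "s = 2 * r - 2 + cb" unfolding r_def by (simp add: field_simps)
    have root: "2 * r\<^sup>2 + 2 * (cb - 2) * r - 4 = 0"
    proof -
      have "(2 * r - 2 + cb)\<^sup>2 = cb\<^sup>2 - 4 * cb + 12" using s2 sr by simp
      then show ?thesis by (simp add: power2_eq_square algebra_simps)
    qed
    have "(ph\<^sup>2 + 2) * (r\<^sup>2 + 2 * r + cb) - (r\<^sup>2 + 2) * (ph\<^sup>2 + 2 * ph + cb)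
        = (ph - r)\<^sup>2 * (cb - 2 + 2 * r) + (ph - r) * (2 * r\<^sup>2 + 2 * (cb - 2) * r - 4)"
      by (simp add: power2_eq_square algebra_simps)
    moreover have "0 \<le> (ph - r)\<^sup>2 * (cb - 2 + 2 * r)" using s0 sr by simp
    ultimately show ?thesis using root phi True by simp
  next
    case False
    then have "s < cb" unfolding r_def by simp
    then have "s\<^sup>2 < cb\<^sup>2" using s0 by (simp add: power_strict_mono)
    then have cb3: "3 < cb" using s2 by simp
    have "(ph\<^sup>2 + 2) * (1\<^sup>2 + 2 * 1 + cb) - (1\<^sup>2 + 2) * (ph\<^sup>2 + 2 * ph + cb)
        = (ph - 1) * (cb * ph + cb - 6)"
      by (simp add: power2_eq_square algebra_simps)
    moreover have "0 \<le> (ph - 1) * (cb * ph + cb - 6)"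
    proof (rule mult_nonneg_nonneg)
      have "cb * 1 \<le> cb * ph" using ph cb3 by (intro mult_left_mono) auto
      then show "0 \<le> cb * ph + cb - 6" using cb3 by linarith
    qed (use ph in simp)
    ultimately show ?thesis using phi False by simp
  qed
  have "1 \<le> phi_bound cb" unfolding phi_bound_def by simp
  then have "0 < (phi_bound cb)\<^sup>2 + 2 * phi_bound cb + cb" "0 < ph\<^sup>2 + 2 * ph + cb"
    using cb ph by (simp_all add: add_pos_pos)
  then show ?thesis unfolding f_bound_def using cross
    by (simp add: divide_le_eq le_divide_eq mult.commute)
qed

lemma ratio_lower_bound:
  fixes A W WS G :: real
  assumes "0 < A" "A \<le> W" "0 < WS" "WS \<le> W + G" "0 \<le> G"
  shows "A / (A + G) \<le> W / WS"
proof -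
  have "A * G \<le> W * G"
    using assms by (simp add: mult_right_mono)
  then have "A * (W + G) \<le> W * (A + G)"
    by (simp add: algebra_simps)
  then have "A / (A + G) \<le> W / (W + G)"
    using assms by (simp add: divide_simps)
  also have "\<dots> \<le> W / WS"
    using assms by (intro divide_left_mono) auto
  finally show ?thesis .
qed

lemma efficiency_bound_algebra:
  fixes c d xm X S2 :: real
  assumes c: "0 < c" and d: "0 < d" and xm: "0 < xm" "xm \<le> X" and S2: "xm\<^sup>2 \<le> S2"
  defines "ph \<equiv> X / xm"
  shows "(ph\<^sup>2 + 2) / (ph\<^sup>2 + 2 * ph + c / d)
    \<le> c * (X\<^sup>2 / 2 + S2) / (c * (X\<^sup>2 / 2 + S2) + (c * (xm * X - S2) + c\<^sup>2 * xm\<^sup>2 / (2 * d)))"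
proof -
  have X: "X = ph * xm" using xm by (simp add: ph_def)
  have den: "c * (X\<^sup>2 / 2 + S2) + (c * (xm * X - S2) + c\<^sup>2 * xm\<^sup>2 / (2 * d))
      = c * (xm\<^sup>2 / 2) * (ph\<^sup>2 + 2 * ph + c / d)"
    using d unfolding X by (simp add: field_simps power2_eq_square)
  have num: "xm\<^sup>2 / 2 * (ph\<^sup>2 + 2) \<le> X\<^sup>2 / 2 + S2"
    using S2 unfolding X by (simp add: algebra_simps power2_eq_square)
  have pos: "0 < ph\<^sup>2 + 2 * ph + c / d"
    using xm c d by (simp add: ph_def add_pos_pos)
  have "(ph\<^sup>2 + 2) / (ph\<^sup>2 + 2 * ph + c / d)
      = c * (xm\<^sup>2 / 2 * (ph\<^sup>2 + 2)) / (c * (xm\<^sup>2 / 2) * (ph\<^sup>2 + 2 * ph + c / d))"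
    using c xm by simp
  also have "\<dots> \<le> c * (X\<^sup>2 / 2 + S2) / (c * (xm\<^sup>2 / 2) * (ph\<^sup>2 + 2 * ph + c / d))"
    using num c xm pos by (intro divide_right_mono mult_left_mono) auto
  finally show ?thesis unfolding den .
qed

text \<open>The market: those parts of Assumptions 1, 2 and 4 and of the convexity of \<open>p\<close> that
  the argument uses.\<close>
locale cournot_market =
  fixes N :: nat and C dC :: "nat \<Rightarrow> real \<Rightarrow> real" and p pL pR :: "real \<Rightarrow> real"
  assumes cost_convex: "\<And>n. n < N \<Longrightarrow> convex_on {0..} (C n)"
    and cost_deriv: "\<And>n q. n < N \<Longrightarrow> 0 < q \<Longrightarrow> (C n has_real_derivative dC n q) (at q)"
    and cost_deriv0: "\<And>n. n < N \<Longrightarrow> (C n has_real_derivative dC n 0) (at 0 within {0..})"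
    and cost_zero: "\<And>n. n < N \<Longrightarrow> C n 0 = 0"
    and price_cont: "continuous_on {0..} p"
    and price_antimono: "antimono_on {0..} p"
    and price_right: "\<And>q. 0 < q \<Longrightarrow> (p has_real_derivative pR q) (at q within {q..})"
    and price_left: "\<And>q. 0 < q \<Longrightarrow> (p has_real_derivative pL q) (at q within {..q})"
    and price_convex: "convex_on {0..} p"
    and entry: "\<exists>n<N. dC n 0 < p 0"
begin

lemma price_le: "0 \<le> a \<Longrightarrow> a \<le> b \<Longrightarrow> p b \<le> p a"
  using price_antimono unfolding monotone_on_def by auto

lemma price_integrable: "0 \<le> a \<Longrightarrow> p integrable_on {a..b}"
  by (intro integrable_continuous_interval continuous_on_subset[OF price_cont]) auto

lemma integral_between:
  "0 \<le> a \<Longrightarrow> a \<le> b \<Longrightarrow> integral {0..b} p - integral {0..a} p = integral {a..b} p"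
  using Henstock_Kurzweil_Integration.integral_combine[of 0 a b p] price_integrable[of 0 b] by simp

lemma cost_right_derivative:
  assumes "n < N" "0 \<le> v"
  shows "(C n has_real_derivative dC n v) (at v within {v..})"
proof (cases "v = 0")
  case True
  then show ?thesis using cost_deriv0[OF assms(1)] by simp
next
  case False
  then show ?thesis using cost_deriv[OF assms(1), of v] assms(2) by (auto intro: has_field_derivative_at_within)
qed

lemma cost_tangent: "n < N \<Longrightarrow> 0 \<le> u \<Longrightarrow> 0 \<le> v \<Longrightarrow> dC n v * (u - v) \<le> C n u - C n v"
  using convex_right_derivative_tangent[OF cost_convex _ _ cost_right_derivative] by blast

lemma marginal_cost_mono:
  assumes n: "n < N" and v: "0 \<le> v" "v \<le> u"
  shows "dC n v \<le> dC n u"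
proof (cases "v = u")
  case False
  have "dC n v * (u - v) \<le> C n u - C n v" "dC n u * (v - u) \<le> C n v - C n u"
    using cost_tangent[OF n] v by auto
  then have "dC n v * (u - v) \<le> dC n u * (u - v)" by (simp add: algebra_simps)
  then show ?thesis using False v by (simp add: mult_le_cancel_right)
qed simp

lemma welfare_improvable:
  assumes y: "nonneg_profile N y" and n: "n < N" and lt: "dC n (y n) < p (total N y)"
  shows "\<exists>y'. nonneg_profile N y' \<and> welfare N p C y < welfare N p C y'"
proof -
  have yn: "0 \<le> y n" and Y: "0 \<le> total N y"
    using y n unfolding nonneg_profile_def total_def by (auto intro: sum_nonneg)
  obtain t where "t > 0" and gain:
      "integral {0..total N y} p - C n (y n) < integral {0..total N y + t} p - C n (y n + t)"
    using marginal_gain[OF price_cont Y cost_right_derivative[OF n yn] lt] by blast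
  then have "nonneg_profile N (y(n := y n + t))"
    using y unfolding nonneg_profile_def by auto
  moreover have "welfare N p C y < welfare N p C (y(n := y n + t))"
    using welfare_raise_one[OF n] gain by simp
  ultimately show ?thesis by blast
qed

lemma optimum_price_le_marginal_cost:
  assumes opt: "social_optimum N p C xS" and n: "n < N"
  shows "p (total N xS) \<le> dC n (xS n)"
proof (rule ccontr)
  assume "\<not> ?thesis"
  with opt n obtain y where "nonneg_profile N y" "welfare N p C xS < welfare N p C y"
    using welfare_improvable unfolding social_optimum_def by (meson not_le)
  with opt show False unfolding social_optimum_def by (meson not_le)
qed

text \<open>By Assumption 4 the zero profile (welfare \<open>0\<close>) can be improved, so \<open>W(x\<^sup>S) > 0\<close>.\<close>
lemma optimum_welfare_pos:
  assumes opt: "social_optimum N p C xS"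
  shows "0 < welfare N p C xS"
proof -
  define z where "z = (\<lambda>_::nat. 0::real)"
  have z: "nonneg_profile N z" "total N z = 0" "welfare N p C z = 0"
    using cost_zero by (simp_all add: z_def nonneg_profile_def total_def welfare_def)
  from entry obtain n where "n < N" "dC n (z n) < p (total N z)"
    using z(2) by (auto simp: z_def)
  then obtain y where "nonneg_profile N y" "0 < welfare N p C y"
    using welfare_improvable[OF z(1)] z(3) by auto
  with opt show ?thesis unfolding social_optimum_def by fastforce
qed

end

locale cournot_outcome = cournot_market +
  fixes x xS :: "nat \<Rightarrow> real"
  assumes candidate: "cournot_candidate N dC p pL pR x"
    and optimum: "social_optimum N p C xS"
begin

abbreviation "X \<equiv> total N x"
abbreviation "XS \<equiv> total N xS"
abbreviation "P \<equiv> p X"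
abbreviation "PS \<equiv> p XS"
abbreviation "W \<equiv> welfare N p C x"
abbreviation "WS \<equiv> welfare N p C xS"
abbreviation "D \<equiv> deriv p X"
abbreviation "S2 \<equiv> (\<Sum>n<N. (x n)\<^sup>2)"
abbreviation "SX \<equiv> (\<Sum>n<N. x n * xS n)"

lemma x_nonneg: "n < N \<Longrightarrow> 0 \<le> x n"
  using candidate unfolding cournot_candidate_def nonneg_profile_def by auto

lemma xS_nonneg: "n < N \<Longrightarrow> 0 \<le> xS n"
  using optimum unfolding social_optimum_def nonneg_profile_def by auto

lemma X_nonneg: "0 \<le> X" and XS_nonneg: "0 \<le> XS"
  unfolding total_def using x_nonneg xS_nonneg by (auto intro: sum_nonneg)

lemma W_le_WS: "W \<le> WS"
  using optimum candidate unfolding social_optimum_def cournot_candidate_def by blast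

lemma candidate_lower: "n < N \<Longrightarrow> P + x n * pR X \<le> dC n (x n)"
  using candidate unfolding cournot_candidate_def by auto

lemma candidate_upper: "n < N \<Longrightarrow> 0 < x n \<Longrightarrow> dC n (x n) \<le> P + x n * pL X"
  using candidate unfolding cournot_candidate_def by auto

lemma active_supplier: obtains m where "m < N" "0 < x m"
proof -
  from entry obtain n where n: "n < N" "dC n 0 < p 0" by blast
  show ?thesis
  proof (rule ccontr)
    assume "\<not> thesis"
    then have "\<forall>k<N. x k = 0" using that x_nonneg by force
    then have "x n = 0" "X = 0" using n(1) by (simp_all add: total_def)
    then show False using candidate_lower[OF n(1)] n(2) by simp
  qed
qed

lemma X_pos: "0 < X"
proof -
  obtain m where "m < N" "0 < x m" by (rule active_supplier)
  then have "x m \<le> X"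
    unfolding total_def using x_nonneg by (intro member_le_sum) auto
  with \<open>0 < x m\<close> show ?thesis by simp
qed

text \<open>An active supplier gives \<open>p'\<^sub>+(X) \<le> p'\<^sub>-(X)\<close>; convexity gives the reverse,
  so \<open>p\<close> is differentiable at \<open>X\<close> with derivative \<open>D\<close>.\<close>
lemma right_le_left_derivative_at_X: "pR X \<le> pL X"
proof -
  obtain m where m: "m < N" "0 < x m" by (rule active_supplier)
  have "P + x m * pR X \<le> P + x m * pL X"
    using candidate_lower[OF m(1)] candidate_upper[OF m] by linarith
  then show ?thesis using m(2) by simp
qed

lemma price_derivative: "(p has_real_derivative pR X) (at X)"
  using convex_two_sided_derivative[OF price_convex X_pos price_left[OF X_pos] price_right[OF X_pos]
      right_le_left_derivative_at_X] .

lemma one_sided_derivatives_at_X: "pR X = D" "pL X = D"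
proof -
  show R: "pR X = D" using price_derivative by (simp add: DERIV_imp_deriv)
  have "pL X \<le> pR X"
    using convex_left_le_right_derivative[OF price_convex X_pos price_left[OF X_pos] price_right[OF X_pos]] .
  with right_le_left_derivative_at_X R show "pL X = D" by simp
qed

lemma price_tangent: "0 \<le> u \<Longrightarrow> D * (u - X) \<le> p u - P"
  using convex_right_derivative_tangent[OF price_convex X_nonneg _ price_right[OF X_pos]]
    one_sided_derivatives_at_X by simp

lemma D_nonpos: "D \<le> 0"
  using price_tangent[of "X + 1"] price_le[OF X_nonneg, of "X + 1"] X_nonneg by simp

lemma marginal_cost_lower: "n < N \<Longrightarrow> P + D * x n \<le> dC n (x n)"
  using candidate_lower one_sided_derivatives_at_X by (simp add: mult.commute)

lemma marginal_cost_active: "n < N \<Longrightarrow> 0 < x n \<Longrightarrow> dC n (x n) = P + D * x n"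
  using candidate_lower candidate_upper one_sided_derivatives_at_X
  by (simp add: mult.commute order_antisym)

text \<open>Costs of the candidate: \<open>C\<^sub>n(x\<^sub>n) \<le> x\<^sub>n C\<^sub>n'(x\<^sub>n) = P x\<^sub>n + D x\<^sub>n\<^sup>2\<close>.\<close>
lemma cost_upper_bound: "(\<Sum>n<N. C n (x n)) \<le> P * X + D * S2"
proof -
  have "C n (x n) \<le> P * x n + D * (x n)\<^sup>2" if n: "n < N" for n
  proof (cases "0 < x n")
    case True
    have "dC n (x n) * (0 - x n) \<le> C n 0 - C n (x n)"
      using cost_tangent[OF n order_refl x_nonneg[OF n]] .
    then show ?thesis
      using marginal_cost_active[OF n True] cost_zero[OF n] by (simp add: algebra_simps power2_eq_square)
  next
    case False
    then show ?thesis using x_nonneg[OF n] cost_zero[OF n] by simp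
  qed
  then have "(\<Sum>n<N. C n (x n)) \<le> (\<Sum>n<N. P * x n + D * (x n)\<^sup>2)"
    by (intro sum_mono) auto
  also have "\<dots> = P * X + D * S2"
    by (simp add: sum.distrib sum_distrib_left total_def)
  finally show ?thesis .
qed

lemma cost_difference_lower:
  "P * (XS - X) + D * (SX - S2) \<le> (\<Sum>n<N. C n (xS n)) - (\<Sum>n<N. C n (x n))"
proof -
  have "(P + D * x n) * (xS n - x n) \<le> C n (xS n) - C n (x n)" if n: "n < N" for n
  proof -
    have "(P + D * x n) * (xS n - x n) \<le> dC n (x n) * (xS n - x n)"
    proof (cases "0 < x n")
      case True
      then show ?thesis using marginal_cost_active[OF n] by simp
    next
      case False
      then have "x n = 0" using x_nonneg[OF n] by simp
      then show ?thesis
        using marginal_cost_lower[OF n] xS_nonneg[OF n] by (simp add: mult_right_mono)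
    qed
    also have "\<dots> \<le> C n (xS n) - C n (x n)"
      using cost_tangent[OF n xS_nonneg[OF n] x_nonneg[OF n]] .
    finally show ?thesis .
  qed
  then have "(\<Sum>n<N. (P + D * x n) * (xS n - x n)) \<le> (\<Sum>n<N. C n (xS n) - C n (x n))"
    by (intro sum_mono) auto
  moreover have "(\<Sum>n<N. (P + D * x n) * (xS n - x n))
      = (\<Sum>n<N. P * xS n - P * x n + (D * (x n * xS n) - D * (x n)\<^sup>2))"
    by (intro sum.cong) (auto simp: algebra_simps power2_eq_square)
  moreover have "\<dots> = P * XS - P * X + (D * SX - D * S2)"
    by (simp add: sum.distrib sum_subtractf sum_distrib_left total_def)
  ultimately show ?thesis
    by (simp add: sum_subtractf algebra_simps)
qed

text \<open>The consumer value at \<open>X\<close> lies above the integral of the tangent line.\<close>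
lemma revenue_integral_lower: "P * X - D * X\<^sup>2 / 2 \<le> integral {0..X} p"
proof -
  have "(P - D * X) * (X - 0) + D * (X\<^sup>2 - 0\<^sup>2) / 2 \<le> integral {0..X} p"
    using X_nonneg price_integrable[OF order_refl] price_tangent
    by (intro integral_ge_affine) (auto simp: algebra_simps)
  then show ?thesis by (simp add: algebra_simps power2_eq_square)
qed

lemma welfare_lower_bound: "- D * (X\<^sup>2 / 2 + S2) \<le> W"
  using cost_upper_bound revenue_integral_lower unfolding welfare_def by (simp add: algebra_simps)

lemma welfare_gap:
  "WS - W \<le> (integral {0..XS} p - integral {0..X} p) - P * (XS - X) - D * (SX - S2)"
  using cost_difference_lower unfolding welfare_def by (simp add: algebra_simps)

text \<open>Part (a): equal prices. If the candidate produces more than the optimum, then some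
  supplier overproduces, and the first-order conditions force \<open>P = PS\<close> and \<open>D = 0\<close>.\<close>
lemma overproduction_flat:
  assumes over: "XS < X"
  shows "P = PS" "D = 0"
proof -
  obtain n where n: "n < N" "xS n < x n"
  proof (rule ccontr)
    assume "\<not> thesis"
    then have "\<forall>k<N. x k \<le> xS k" using that by (meson not_le)
    then have "X \<le> XS" unfolding total_def by (intro sum_mono) auto
    with over show False by simp
  qed
  have active: "0 < x n" using n xS_nonneg[OF n(1)] by linarith
  have "PS \<le> dC n (xS n)" using optimum_price_le_marginal_cost[OF optimum n(1)] .
  also have "\<dots> \<le> dC n (x n)" using marginal_cost_mono[OF n(1) xS_nonneg[OF n(1)]] n(2) by simp
  also have "\<dots> = P + D * x n" using marginal_cost_active[OF n(1) active] .
  finally have "PS \<le> P + D * x n" .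
  moreover have "D * x n \<le> 0" using D_nonpos active by (simp add: mult_nonpos_nonneg)
  moreover have "P \<le> PS" using price_le[OF XS_nonneg] over by simp
  ultimately have "P = PS" "D * x n = 0" by linarith+
  then show "P = PS" "D = 0" using active by simp_all
qed

text \<open>Equal prices force \<open>D = 0\<close>: if \<open>X < XS\<close>, \<open>p\<close> is constant to the right of \<open>X\<close>;
  if \<open>X = XS\<close> and \<open>D < 0\<close>, every active supplier would underproduce, forcing \<open>X < XS\<close>.\<close>
lemma equal_prices_flat_derivative:
  assumes eq: "P = PS"
  shows "D = 0"
proof -
  consider "X < XS" | "XS < X" | "XS = X" by linarith
  then show ?thesis
  proof cases
    case 1
    have lim: "(diff_quot p X \<longlongrightarrow> D) (at_right X)"
      using has_field_derivative_at_within[OF price_derivative] one_sided_derivatives_at_X(1)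
      by (simp add: right_derivative_diff_quot)
    have "\<forall>\<^sub>F y in at_right X. diff_quot p X y = 0"
      using eventually_at_right_real[OF 1]
    proof eventually_elim
      case (elim y)
      then have "p y \<le> P" "PS \<le> p y"
        using price_le[OF X_nonneg, of y] price_le[of y XS] X_nonneg by auto
      then show ?case using eq by (simp add: diff_quot_def)
    qed
    then have "(diff_quot p X \<longlongrightarrow> 0) (at_right X)" by (rule tendsto_eventually)
    with lim show ?thesis using tendsto_unique[OF trivial_limit_at_right_real] by blast
  next
    case 2
    then show ?thesis by (rule overproduction_flat)
  next
    case 3
    show ?thesis
    proof (rule ccontr)
      assume "D \<noteq> 0"
      then have neg: "D < 0" using D_nonpos by simp
      have more: "x n < xS n" if n: "n < N" "0 < x n" for n
      proof (rule ccontr)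
        assume "\<not> x n < xS n"
        then have "dC n (xS n) \<le> dC n (x n)"
          using marginal_cost_mono[OF n(1) xS_nonneg[OF n(1)]] by simp
        moreover have "D * x n < 0" using neg n(2) by (simp add: mult_neg_pos)
        ultimately show False
          using optimum_price_le_marginal_cost[OF optimum n(1)] marginal_cost_active[OF n] eq by simp
      qed
      have "\<forall>n\<in>{..<N}. x n \<le> xS n"
      proof
        fix n assume "n \<in> {..<N}"
        then show "x n \<le> xS n"
          using more[of n] x_nonneg[of n] xS_nonneg[of n] by (cases "0 < x n") auto
      qed
      moreover obtain m where "m < N" "0 < x m" by (rule active_supplier)
      then have "\<exists>m\<in>{..<N}. x m < xS m" using more by blast
      ultimately have "X < XS" unfolding total_def by (intro sum_strict_mono_ex1) auto
      with 3 show False by simp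
    qed
  qed
qed

text \<open>With equal prices \<open>p\<close> is constant between \<open>X\<close> and \<open>XS\<close>.\<close>
lemma equal_prices_integral:
  assumes eq: "P = PS"
  shows "integral {0..XS} p - integral {0..X} p = P * (XS - X)"
proof -
  have flat: "integral {a..b} p = P * (b - a)"
    if ab: "a \<le> b" and ends: "(a = X \<and> b = XS) \<or> (a = XS \<and> b = X)" for a b
  proof -
    have "p q = P" if q: "q \<in> {a..b}" for q
    proof -
      have "0 \<le> a" using ends X_nonneg XS_nonneg by auto
      then have "p b \<le> p q" "p q \<le> p a" using q price_le[of q b] price_le[of a q] by auto
      then show ?thesis using ends eq by auto
    qed
    then have "integral {a..b} p = integral {a..b} (\<lambda>_. P)" by (rule integral_cong)
    then show ?thesis using ab by simp
  qed
  show ?thesis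
  proof (cases "X \<le> XS")
    case True
    then show ?thesis using integral_between[OF X_nonneg] flat by simp
  next
    case False
    then have "integral {0..X} p - integral {0..XS} p = P * (X - XS)"
      using integral_between[OF XS_nonneg] flat[of XS X] by simp
    then show ?thesis by (simp add: algebra_simps)
  qed
qed

theorem efficiency_equal_prices:
  assumes "P = PS"
  shows "efficiency N p C xS x = 1"
proof -
  have "WS \<le> W"
    using welfare_gap equal_prices_flat_derivative[OF assms] equal_prices_integral[OF assms] by simp
  then have "W = WS" using W_le_WS by simp
  then show ?thesis using optimum_welfare_pos[OF optimum] by (simp add: efficiency_def)
qed

lemma unequal_prices_underproduction:
  assumes "P \<noteq> PS"
  shows "X < XS"
  using assms overproduction_flat(1) by (cases "X = XS") force+

lemma unequal_prices_slopes:
  assumes ne: "P \<noteq> PS"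
  defines "d \<equiv> (P - PS) / (XS - X)"
  shows "0 < d" "d \<le> - D"
proof -
  have under: "X < XS" using unequal_prices_underproduction[OF ne] .
  then have "PS < P" using ne price_le[OF X_nonneg, of XS] by simp
  then show "0 < d" using under by (simp add: d_def)
  have "D * (XS - X) \<le> PS - P" using price_tangent[OF XS_nonneg] .
  then show "d \<le> - D" using under by (simp add: d_def divide_le_eq algebra_simps)
qed

text \<open>Trapezoid bound for the extra consumer value:
  \<open>WS - W \<le> -d (XS - X)\<^sup>2/2 - D (SX - S2)\<close>.\<close>
lemma welfare_gap_chord:
  assumes ne: "P \<noteq> PS"
  defines "d \<equiv> (P - PS) / (XS - X)"
  shows "WS - W \<le> - d * (XS - X)\<^sup>2 / 2 - D * (SX - S2)"
proof -
  have under: "X < XS" using unequal_prices_underproduction[OF ne] .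
  have "integral {X..XS} p \<le> (XS - X) * (P + PS) / 2"
    using under X_nonneg
    by (intro convex_integral_le_trapezoid convex_on_subset[OF price_convex]
        continuous_on_subset[OF price_cont]) auto
  also have "\<dots> = P * (XS - X) - d * (XS - X)\<^sup>2 / 2"
    using under by (simp add: d_def field_simps power2_eq_square)
  finally show ?thesis
    using welfare_gap integral_between[OF X_nonneg] under by simp
qed

abbreviation "xmax \<equiv> Max (x ` {..<N})"

lemma xmax_props: "0 < xmax" "xmax \<le> X" "xmax\<^sup>2 \<le> S2" "SX \<le> xmax * XS"
proof -
  have fin: "finite (x ` {..<N})" "x ` {..<N} \<noteq> {}"
    using active_supplier by blast+
  obtain k where k: "k < N" "xmax = x k" using Max_in[OF fin] by auto
  have ge: "x n \<le> xmax" if "n < N" for n using fin that by (intro Max_ge) auto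
  obtain m where "m < N" "0 < x m" by (rule active_supplier)
  then show "0 < xmax" using ge[of m] by linarith
  show "xmax \<le> X" unfolding total_def k(2) using k x_nonneg by (intro member_le_sum) auto
  show "xmax\<^sup>2 \<le> S2" unfolding k(2) using k by (intro member_le_sum) auto
  have "SX \<le> (\<Sum>n<N. xmax * xS n)"
    using ge xS_nonneg by (intro sum_mono mult_right_mono) auto
  then show "SX \<le> xmax * XS" by (simp add: total_def sum_distrib_left)
qed

text \<open>Maximising over \<open>XS - X\<close> (AM-GM) removes the optimum from the loss bound.\<close>
lemma welfare_gap_bound:
  assumes ne: "P \<noteq> PS"
  defines "c \<equiv> - D" and "d \<equiv> (P - PS) / (XS - X)"
  shows "WS - W \<le> c * (xmax * X - S2) + c\<^sup>2 * xmax\<^sup>2 / (2 * d)"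
proof -
  define \<Delta> where "\<Delta> = XS - X"
  have d: "0 < d" "d \<le> c" using unequal_prices_slopes[OF ne] by (simp_all add: c_def d_def)
  have amgm: "c * xmax * \<Delta> - d * \<Delta>\<^sup>2 / 2 \<le> c\<^sup>2 * xmax\<^sup>2 / (2 * d)"
  proof -
    have "0 \<le> (c * xmax - d * \<Delta>)\<^sup>2" by simp
    then have "2 * d * (c * xmax * \<Delta> - d * \<Delta>\<^sup>2 / 2) \<le> c\<^sup>2 * xmax\<^sup>2"
      by (simp add: power2_eq_square algebra_simps)
    then show ?thesis using d by (simp add: le_divide_eq mult.commute)
  qed
  have "c * SX \<le> c * (xmax * XS)" using xmax_props(4) d by simp
  then have "WS - W \<le> - d * \<Delta>\<^sup>2 / 2 + c * (xmax * XS - S2)"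
    using welfare_gap_chord[OF ne] by (simp add: c_def d_def \<Delta>_def algebra_simps)
  also have "\<dots> = (c * xmax * \<Delta> - d * \<Delta>\<^sup>2 / 2) + c * (xmax * X - S2)"
    by (simp add: \<Delta>_def algebra_simps)
  finally show ?thesis using amgm by simp
qed

text \<open>With \<open>D < 0\<close> an active supplier's marginal cost is below the price, so the
  candidate is not socially optimal.\<close>
lemma unequal_prices_not_optimal:
  assumes ne: "P \<noteq> PS"
  shows "W < WS"
proof -
  obtain m where m: "m < N" "0 < x m" by (rule active_supplier)
  have "D < 0" using unequal_prices_slopes[OF ne] by linarith
  then have "dC m (x m) < P" using marginal_cost_active[OF m] m(2) by (simp add: mult_neg_pos)
  then obtain y where "nonneg_profile N y" "W < welfare N p C y"
    using welfare_improvable[OF _ m(1)] candidate unfolding cournot_candidate_def by blast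
  with optimum show ?thesis unfolding social_optimum_def by fastforce
qed

theorem efficiency_unequal_prices:
  assumes ne: "P \<noteq> PS"
  defines "cb \<equiv> \<bar>D\<bar> / \<bar>(PS - P) / (XS - X)\<bar>"
  shows "1 \<le> cb" "efficiency N p C xS x < 1" "f_bound cb \<le> efficiency N p C xS x"
proof -
  define c where "c = - D"
  define d where "d = (P - PS) / (XS - X)"
  have d: "0 < d" "d \<le> c" using unequal_prices_slopes[OF ne] by (simp_all add: c_def d_def)
  have "(PS - P) / (XS - X) = - d" by (simp add: d_def minus_divide_left)
  then have cb: "cb = c / d"
    using d D_nonpos by (simp add: cb_def c_def)
  show "1 \<le> cb" using d by (simp add: cb)
  have WS: "0 < WS" using optimum_welfare_pos[OF optimum] .
  show "efficiency N p C xS x < 1"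
    using unequal_prices_not_optimal[OF ne] WS by (simp add: efficiency_def)
  have "f_bound cb \<le> ((X / xmax)\<^sup>2 + 2) / ((X / xmax)\<^sup>2 + 2 * (X / xmax) + c / d)"
    unfolding cb using \<open>1 \<le> cb\<close> xmax_props by (intro f_bound_minimal) (simp_all add: cb)
  also have "\<dots> \<le> c * (X\<^sup>2 / 2 + S2) / (c * (X\<^sup>2 / 2 + S2) + (c * (xmax * X - S2) + c\<^sup>2 * xmax\<^sup>2 / (2 * d)))"
    using d xmax_props by (intro efficiency_bound_algebra) auto
  also have "\<dots> \<le> W / WS"
  proof (rule ratio_lower_bound)
    show "0 < c * (X\<^sup>2 / 2 + S2)"
      using d X_pos by (intro mult_pos_pos add_pos_nonneg) (auto simp: sum_nonneg)
    show "c * (X\<^sup>2 / 2 + S2) \<le> W" using welfare_lower_bound by (simp add: c_def)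
    show "WS \<le> W + (c * (xmax * X - S2) + c\<^sup>2 * xmax\<^sup>2 / (2 * d))"
      using welfare_gap_bound[OF ne] by (simp add: c_def d_def)
    show "0 \<le> c * (xmax * X - S2) + c\<^sup>2 * xmax\<^sup>2 / (2 * d)"
      using welfare_gap_bound[OF ne] unequal_prices_not_optimal[OF ne] by (simp add: c_def d_def)
  qed (rule WS)
  finally show "f_bound cb \<le> efficiency N p C xS x" by (simp add: efficiency_def)
qed

end

theorem theorem2:
  fixes N :: nat
    and C :: "nat \<Rightarrow> real \<Rightarrow> real" and dC :: "nat \<Rightarrow> real \<Rightarrow> real"
    and p :: "real \<Rightarrow> real" and pL :: "real \<Rightarrow> real" and pR :: "real \<Rightarrow> real"
    and x :: "nat \<Rightarrow> real" and xS :: "nat \<Rightarrow> real"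
  assumes A1_convex: "\<And>n. n < N \<Longrightarrow> convex_on {0..} (C n)"
    and A1_cont: "\<And>n. n < N \<Longrightarrow> continuous_on {0..} (C n)"
    and A1_mono: "\<And>n. n < N \<Longrightarrow> mono_on {0..} (C n)"
    and A1_deriv: "\<And>n q. n < N \<Longrightarrow> 0 < q \<Longrightarrow> (C n has_real_derivative dC n q) (at q)"
    and A1_deriv_cont: "\<And>n. n < N \<Longrightarrow> continuous_on {0<..} (dC n)"
    and A1_deriv0: "\<And>n. n < N \<Longrightarrow> (C n has_real_derivative dC n 0) (at 0 within {0..})"
    and A1_zero: "\<And>n. n < N \<Longrightarrow> C n 0 = 0"
    and A2_cont: "continuous_on {0..} p"
    and A2_nonneg: "\<And>q. 0 \<le> q \<Longrightarrow> 0 \<le> p q"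
    and A2_antimono: "antimono_on {0..} p"
    and A2_pos: "0 < p 0"
    and A2_right0: "(p has_real_derivative pR 0) (at 0 within {0..})"
    and A2_right: "\<And>q. 0 < q \<Longrightarrow> (p has_real_derivative pR q) (at q within {q..})"
    and A2_left: "\<And>q. 0 < q \<Longrightarrow> (p has_real_derivative pL q) (at q within {..q})"
    and A3: "\<exists>R>0. \<forall>n<N. p R \<le> dC n 0"
    and A4: "\<exists>n<N. dC n 0 < p 0"
    and p_convex: "convex_on {0..} p"
    and cand: "cournot_candidate N dC p pL pR x"
    and opt: "social_optimum N p C xS"
  shows "(p (total N x) = p (total N xS) \<longrightarrow> efficiency N p C xS x = 1) \<and>
         (p (total N x) \<noteq> p (total N xS) \<longrightarrow>
            (let c = \<bar>deriv p (total N x)\<bar>;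
                 d = \<bar>(p (total N xS) - p (total N x)) / (total N xS - total N x)\<bar>;
                 cb = c / d
             in cb \<ge> 1 \<and> 1 > efficiency N p C xS x \<and> efficiency N p C xS x \<ge> f_bound cb))"
proof -
  interpret cournot_outcome N C dC p pL pR x xS
    by unfold_locales (fact assms)+
  show ?thesis
    using efficiency_equal_prices efficiency_unequal_prices unfolding Let_def by auto
qed

end
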